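(* Let $N\ge1$, let $X_1,\dots,X_N$ be the roots of the $N$-th Legendre polynomial transformed to $[0,1]$, and let $h_1,\dots,h_N$ be the associated Lagrange basis polynomials (a basis of $\mathsf{P}_{N-1}$, the real polynomials of degree at most $N-1$). Consider a closed sliding interface consisting of finitely many non-overlapping mortars $\Xi$, which together cover the interface, and finitely many cell faces on each of its two sides (left and right); each mortar is contained in exactly one left cell face and exactly one right cell face, and each cell face $\Omega$ is the union of the $m_\Omega\ge1$ mortars $\Xi_1,\dots,\Xi_{m_\Omega}$ contained in it. For each such face $\Omega$ and each of its mortars $\Xi_k$, let $s_k>0$ (with $\sum_k s_k=1$) be the ratio of the length of $\Xi_k$ to the length of $\Omega$ and $o_k=\sum_{\alpha<k}s_\alpha$, so that the face parameter $\xi\in[0,1]$ and the mortar parameter $z\in[0,1]$ are related by $\xi=o_k+s_kz$. Suppose each mortar $\Xi$ carries a single polynomial $\breve F^{\Xi}\in\mathsf{P}_{N-1}$ in $z$ (its common normal flux in mortar-space scaling), and for each cell face $\Omega$ (on either side) define $\widetilde F^{\Omega}\in\mathsf{P}_{N-1}$ in $\xi$ by $$\sum_{k=1}^{m_\Omega}\int_{o_k}^{o_k+s_k}\Big(\widetilde F^{\Omega}(\xi)-\tfrac{1}{s_k}\breve F^{\Xi_k}\big(\tfrac{\xi-o_k}{s_k}\big)\Big)h_j(\xi)\,d\xi=0\quad\text{for all }j=1,\dots,N.$$ Then for every cell face $\Omega$, $\int_0^1\widetilde F^{\Omega}(\xi)\,d\xi=\sum_{k=1}^{m_\Omega}\int_0^1\breve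 F^{\Xi_k}(z)\,dz$, and consequently $$\sum_{\Omega\ \text{left}}\int_0^1\widetilde F^{\Omega}(\xi)\,d\xi=\sum_{\Xi}\int_0^1\breve F^{\Xi}(z)\,dz=\sum_{\Omega\ \text{right}}\int_0^1\widetilde F^{\Omega}(\xi)\,d\xi,$$ i.e. the total flux on the left side of the sliding interface equals the total flux on the right side (global conservation across the interface).
   Context: This describes the back-projection of common fluxes from mortar elements to cell faces on a nonconforming sliding interface between two mesh subdomains in a high-order (flux reconstruction) discretization. The mortar-space flux $\breve F^{\Xi_k}$ is related to the computational-space flux on the mortar by $\widetilde F^{\Xi_k}=\breve F^{\Xi_k}/s_k$, which is the factor appearing in the defining relation; the same projection is used for both inviscid and viscous fluxes. *)

theory Defs
  imports "HOL-Analysis.Analysis" "HOL-Computational_Algebra.Polynomial"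
begin

text \<open>Legendre polynomials on [-1,1] via the Bonnet recurrence
  (n+1) P_(n+1) = (2n+1) x P_n - n P_(n-1).\<close>
fun legendre :: "nat \<Rightarrow> real poly" where
  "legendre 0 = 1"
| "legendre (Suc 0) = [:0, 1:]"
| "legendre (Suc (Suc n)) =
     smult (1 / real (n + 2))
       (smult (real (2 * n + 3)) ([:0, 1:] * legendre (Suc n))
        - smult (real (n + 1)) (legendre n))"

text \<open>X 1, ..., X N are the roots of the N-th Legendre polynomial transformed to [0,1]
  (xi = (x+1)/2): they are N pairwise distinct points with P_N(2 X_i - 1) = 0.
  Since P_N has degree N, these are exactly all its roots.\<close>
definition legendre_nodes01 :: "nat \<Rightarrow> (nat \<Rightarrow> real) \<Rightarrow> bool" where
  "legendre_nodes01 N X \<longleftrightarrow> inj_on X {1..N} \<and>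
     (\<forall>i\<in>{1..N}. poly (legendre N) (2 * X i - 1) = 0)"

definition lagrange_basis :: "nat \<Rightarrow> (nat \<Rightarrow> real) \<Rightarrow> nat \<Rightarrow> real poly" where
  "lagrange_basis N X j = (\<Prod>i\<in>{1..N} - {j}. smult (1 / (X j - X i)) [:- X i, 1:])"

definition face_len :: "('m \<Rightarrow> real) \<Rightarrow> 'm list \<Rightarrow> real" where
  "face_len len ms = (\<Sum>x\<leftarrow>ms. len x)"

text \<open>s_k (0-based index k): ratio of the length of the k-th mortar to the face length.\<close>
definition sk :: "('m \<Rightarrow> real) \<Rightarrow> 'm list \<Rightarrow> nat \<Rightarrow> real" where
  "sk len ms k = len (ms ! k) / face_len len ms"

definition ok :: "('m \<Rightarrow> real) \<Rightarrow> 'm list \<Rightarrow> nat \<Rightarrow> real" where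
  "ok len ms k = (\<Sum>a<k. sk len ms a)"

end

theory Submission
  imports Defs
begin

text \<open>Since the Lagrange basis polynomials sum to the constant 1, adding up the N projection
  equations of a face gives \<open>\<Sum>\<^sub>k \<integral>\<^bsub>[o\<^sub>k, o\<^sub>k+s\<^sub>k]\<^esub> (F - F\<^sub>k) = 0\<close>. The intervals
  \<open>[o\<^sub>k, o\<^sub>k+s\<^sub>k]\<close> tile \<open>[0,1]\<close>, and the substitution \<open>\<xi> = o\<^sub>k + s\<^sub>k z\<close> absorbs the factor
  \<open>1/s\<^sub>k\<close>, so the face integral equals the sum of its mortar integrals. Every mortar lies in
  exactly one face on each side, so summing over the faces of either side gives the sum over
  all mortars.\<close>

lemma integral_rescaled_interval:
  fixes f :: "real \<Rightarrow> real"
  assumes s: "s > 0" and f: "f integrable_on {0..1}"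
  shows "integral {c..c+s} (\<lambda>\<xi>. (1/s) * f ((\<xi> - c) / s)) = integral {0..1} f"
proof -
  have "(f has_integral integral {0..1} f) (cbox 0 1)"
    using integrable_integral[OF f] by (simp add: cbox_interval)
  from has_integral_affinity'[OF this, of "1/s" "- c/s"]
  have affine: "((\<lambda>\<xi>. f ((1/s) * \<xi> + - c/s)) has_integral integral {0..1} f /\<^sub>R (1/s))
      (cbox ((0 - - c/s) /\<^sub>R (1/s)) ((1 - - c/s) /\<^sub>R (1/s)))"
    using s by simp
  have interval: "cbox ((0 - - c/s) /\<^sub>R (1/s)) ((1 - - c/s) /\<^sub>R (1/s)) = {c..c+s}"
    using s by (simp add: cbox_interval field_simps)
  have "((\<lambda>\<xi>. f ((1/s) * \<xi> + - c/s)) has_integral integral {0..1} f * s) {c..c+s}"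
    using affine unfolding interval by (simp add: mult.commute)
  then have "((\<lambda>\<xi>. (1/s) * f ((1/s) * \<xi> + - c/s)) has_integral (1/s) * (integral {0..1} f * s)) {c..c+s}"
    by (rule has_integral_mult_right)
  moreover have "(1/s) * \<xi> + - c/s = (\<xi> - c) / s" for \<xi>
    by (simp add: diff_divide_distrib)
  ultimately have "((\<lambda>\<xi>. (1/s) * f ((\<xi> - c) / s)) has_integral integral {0..1} f) {c..c+s}"
    using s by simp
  then show ?thesis
    by (rule integral_unique)
qed

lemma integral_consecutive_intervals:
  fixes f :: "real \<Rightarrow> real" and s :: "nat \<Rightarrow> real"
  assumes nonneg: "\<And>k. k < m \<Longrightarrow> s k \<ge> 0" and f: "f integrable_on {0..(\<Sum>k<m. s k)}"
  shows "(\<Sum>k<m. integral {(\<Sum>a<k. s a)..(\<Sum>a<k. s a) + s k} f) = integral {0..(\<Sum>k<m. s k)} f"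
using nonneg f proof (induction m)
  case 0
  then show ?case by simp
next
  case (Suc m)
  let ?o = "\<Sum>a<m. s a"
  have "0 \<le> ?o" and "0 \<le> s m"
    using Suc.prems(1) by (auto intro: sum_nonneg)
  moreover have "f integrable_on {0..?o + s m}"
    using Suc.prems(2) by simp
  ultimately have combine: "integral {0..?o} f + integral {?o..?o + s m} f = integral {0..?o + s m} f"
    by (intro Henstock_Kurzweil_Integration.integral_combine) auto
  have "f integrable_on {0..?o}"
    using \<open>f integrable_on {0..?o + s m}\<close> by (rule integrable_on_subinterval) (use \<open>0 \<le> s m\<close> in auto)
  then have "(\<Sum>k<m. integral {(\<Sum>a<k. s a)..(\<Sum>a<k. s a) + s k} f) = integral {0..?o} f"
    using Suc.IH Suc.prems(1) by simp
  with combine show ?case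
    by (simp add: add.commute)
qed

lemma degree_lagrange_basis_le:
  assumes "j \<in> {1..N}"
  shows "degree (lagrange_basis N X j) \<le> N - 1"
proof -
  have "degree (lagrange_basis N X j)
      \<le> sum (degree \<circ> (\<lambda>i. smult (1 / (X j - X i)) [:- X i, 1:])) ({1..N} - {j})"
    unfolding lagrange_basis_def by (rule degree_prod_sum_le) simp
  also have "\<dots> \<le> (\<Sum>i\<in>{1..N} - {j}. 1)"
    by (rule sum_mono) (simp add: order_trans[OF degree_smult_le])
  also have "\<dots> = N - 1"
    using assms by simp
  finally show ?thesis .
qed

lemma poly_lagrange_basis_node:
  assumes inj: "inj_on X {1..N}" and i: "i \<in> {1..N}" and j: "j \<in> {1..N}"
  shows "poly (lagrange_basis N X j) (X i) = (if i = j then 1 else 0)"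
proof (cases "i = j")
  case True
  have "poly (smult (1 / (X j - X k)) [:- X k, 1:]) (X j) = 1" if "k \<in> {1..N} - {j}" for k
  proof -
    have "X j \<noteq> X k"
      using inj j that by (auto dest: inj_onD)
    then show ?thesis
      by (simp add: diff_divide_distrib[symmetric])
  qed
  then show ?thesis
    unfolding lagrange_basis_def poly_prod using True by (simp add: prod.neutral)
next
  case False
  have "poly (lagrange_basis N X j) (X i) = 0"
    unfolding lagrange_basis_def poly_prod by (rule prod_zero) (use i False in auto)
  with False show ?thesis
    by simp
qed

lemma lagrange_interpolation:
  fixes p :: "real poly"
  assumes inj: "inj_on X {1..N}" and deg: "degree p < N"
  shows "p = (\<Sum>j\<in>{1..N}. smult (poly p (X j)) (lagrange_basis N X j))"
proof (rule poly_eqI_degree[of "X ` {1..N}"])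
  fix x
  assume "x \<in> X ` {1..N}"
  then obtain i where i: "i \<in> {1..N}" and x: "x = X i"
    by blast
  have "poly (\<Sum>j\<in>{1..N}. smult (poly p (X j)) (lagrange_basis N X j)) (X i)
      = (\<Sum>j\<in>{1..N}. poly p (X j) * (if i = j then 1 else 0))"
    by (simp add: poly_sum poly_lagrange_basis_node[OF inj i])
  also have "\<dots> = (\<Sum>j\<in>{1..N}. if i = j then poly p (X j) else 0)"
    by (rule sum.cong) auto
  also have "\<dots> = poly p (X i)"
    using i by simp
  finally show "poly p x = poly (\<Sum>j\<in>{1..N}. smult (poly p (X j)) (lagrange_basis N X j)) x"
    unfolding x ..
next
  have card: "card (X ` {1..N}) = N"
    using card_image[OF inj] by simp
  then show "degree p < card (X ` {1..N})"
    using deg by simp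
  have "degree (\<Sum>j\<in>{1..N}. smult (poly p (X j)) (lagrange_basis N X j)) \<le> N - 1"
    by (intro degree_sum_le order_trans[OF degree_smult_le] degree_lagrange_basis_le) auto
  with card deg show "degree (\<Sum>j\<in>{1..N}. smult (poly p (X j)) (lagrange_basis N X j)) < card (X ` {1..N})"
    by linarith
qed

corollary sum_lagrange_basis:
  assumes "inj_on X {1..N}" and "N \<ge> 1"
  shows "(\<Sum>j\<in>{1..N}. lagrange_basis N X j) = 1"
  using lagrange_interpolation[of X N 1] assms by simp

lemma sum_integral_eq_if_orthogonal_to_partition_of_unity:
  fixes F :: "real \<Rightarrow> real" and g :: "nat \<Rightarrow> real \<Rightarrow> real" and h :: "'j \<Rightarrow> real \<Rightarrow> real"
  assumes J: "finite J" and unity: "\<And>\<xi>. (\<Sum>j\<in>J. h j \<xi>) = 1"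
    and F: "continuous_on UNIV F" and g: "\<And>k. k < m \<Longrightarrow> continuous_on UNIV (g k)"
    and h: "\<And>j. j \<in> J \<Longrightarrow> continuous_on UNIV (h j)"
    and orth: "\<And>j. j \<in> J \<Longrightarrow> (\<Sum>k<m. integral {a k..b k} (\<lambda>\<xi>. (F \<xi> - g k \<xi>) * h j \<xi>)) = 0"
  shows "(\<Sum>k<m. integral {a k..b k} F) = (\<Sum>k<m. integral {a k..b k} (g k))"
proof -
  have integrable: "(\<lambda>\<xi>. (F \<xi> - g k \<xi>) * h j \<xi>) integrable_on {a k..b k}"
    if "k < m" "j \<in> J" for j k
  proof -
    have "continuous_on UNIV (\<lambda>\<xi>. (F \<xi> - g k \<xi>) * h j \<xi>)"
      using F g h that by (intro continuous_intros) auto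
    then show ?thesis
      by (meson continuous_on_subset integrable_continuous_interval subset_UNIV)
  qed
  have "0 = (\<Sum>j\<in>J. \<Sum>k<m. integral {a k..b k} (\<lambda>\<xi>. (F \<xi> - g k \<xi>) * h j \<xi>))"
    using orth by simp
  also have "\<dots> = (\<Sum>k<m. \<Sum>j\<in>J. integral {a k..b k} (\<lambda>\<xi>. (F \<xi> - g k \<xi>) * h j \<xi>))"
    by (rule sum.swap)
  also have "\<dots> = (\<Sum>k<m. integral {a k..b k} (\<lambda>\<xi>. \<Sum>j\<in>J. (F \<xi> - g k \<xi>) * h j \<xi>))"
    using integrable by (intro sum.cong refl integral_sum[symmetric] J) auto
  also have "\<dots> = (\<Sum>k<m. integral {a k..b k} (\<lambda>\<xi>. F \<xi> - g k \<xi>))"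
    by (simp add: sum_distrib_left[symmetric] unity)
  also have "\<dots> = (\<Sum>k<m. integral {a k..b k} F - integral {a k..b k} (g k))"
    using F g by (intro sum.cong refl integral_diff)
      (auto intro: integrable_continuous_interval continuous_on_subset)
  also have "\<dots> = (\<Sum>k<m. integral {a k..b k} F) - (\<Sum>k<m. integral {a k..b k} (g k))"
    by (rule sum_subtractf)
  finally show ?thesis
    by simp
qed

lemma face_len_eq_sum_nth: "face_len len L = (\<Sum>k<length L. len (L ! k))"
  unfolding face_len_def by (simp add: sum_list_sum_nth atLeast0LessThan)

lemma face_len_pos:
  assumes "L \<noteq> []" and "\<forall>x\<in>set L. len x > 0"
  shows "face_len len L > 0"
  unfolding face_len_def using sum_list_strict_mono[of L "\<lambda>_. 0" len] assms by simp

lemma sk_pos: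
  assumes "\<forall>x\<in>set L. len x > 0" and "k < length L"
  shows "sk len L k > 0"
proof -
  have "L \<noteq> []" and "len (L ! k) > 0"
    using assms by auto
  then show ?thesis
    using face_len_pos[of L len] assms(1) unfolding sk_def by simp
qed

lemma sum_sk_eq_1:
  assumes "L \<noteq> []" and "\<forall>x\<in>set L. len x > 0"
  shows "(\<Sum>k<length L. sk len L k) = 1"
  using face_len_pos[OF assms] unfolding sk_def
  by (simp add: sum_divide_distrib[symmetric] face_len_eq_sum_nth)

lemma projection_preserves_face_integral:
  fixes F :: "real poly" and Fb :: "'m \<Rightarrow> real poly"
  assumes inj: "inj_on X {1..N}" and N: "N \<ge> 1"
    and L: "L \<noteq> []" and len: "\<forall>x\<in>set L. len x > 0"
    and proj: "\<forall>j\<in>{1..N}. (\<Sum>k<length L. integral {ok len L k .. ok len L k + sk len L k}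
      (\<lambda>\<xi>. (poly F \<xi> - (1 / sk len L k) * poly (Fb (L ! k)) ((\<xi> - ok len L k) / sk len L k))
           * poly (lagrange_basis N X j) \<xi>)) = 0"
  shows "integral {0..1} (poly F) = (\<Sum>k<length L. integral {0..1} (poly (Fb (L ! k))))"
proof -
  let ?s = "sk len L" and ?o = "ok len L"
  have "poly F integrable_on {0..1}"
    by (rule integrable_continuous_interval) (intro continuous_intros)
  then have "integral {0..1} (poly F) = (\<Sum>k<length L. integral {?o k..?o k + ?s k} (poly F))"
    using integral_consecutive_intervals[of "length L" ?s "poly F"] sk_pos[OF len]
    by (simp add: ok_def sum_sk_eq_1[OF L len] less_imp_le)
  also have "\<dots> = (\<Sum>k<length L. integral {?o k..?o k + ?s k}
      (\<lambda>\<xi>. (1 / ?s k) * poly (Fb (L ! k)) ((\<xi> - ?o k) / ?s k)))"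
  proof (rule sum_integral_eq_if_orthogonal_to_partition_of_unity
      [where J = "{1..N}" and h = "\<lambda>j. poly (lagrange_basis N X j)"])
    show "(\<Sum>j\<in>{1..N}. poly (lagrange_basis N X j) \<xi>) = 1" for \<xi>
      using sum_lagrange_basis[OF inj N] by (metis poly_1 poly_sum)
    show "continuous_on UNIV (\<lambda>\<xi>. (1 / ?s k) * poly (Fb (L ! k)) ((\<xi> - ?o k) / ?s k))"
      if "k < length L" for k
      using sk_pos[OF len that] by (intro continuous_intros) auto
    show "(\<Sum>k<length L. integral {?o k..?o k + ?s k}
        (\<lambda>\<xi>. (poly F \<xi> - (1 / ?s k) * poly (Fb (L ! k)) ((\<xi> - ?o k) / ?s k))
             * poly (lagrange_basis N X j) \<xi>)) = 0" if "j \<in> {1..N}" for j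
      using proj that by blast
  qed (auto intro: continuous_on_poly)
  also have "\<dots> = (\<Sum>k<length L. integral {0..1} (poly (Fb (L ! k))))"
    using sk_pos[OF len]
    by (intro sum.cong refl integral_rescaled_interval integrable_continuous_interval
        continuous_on_poly) auto
  finally show ?thesis .
qed

lemma sum_over_fibre_enumerations:
  assumes "finite M" and "finite Fs" and "\<forall>x\<in>M. f x \<in> Fs"
    and enum: "\<forall>\<Omega>\<in>Fs. distinct (ms \<Omega>) \<and> set (ms \<Omega>) = {x\<in>M. f x = \<Omega>}"
    and V: "\<forall>\<Omega>\<in>Fs. V \<Omega> = (\<Sum>k<length (ms \<Omega>). G (ms \<Omega> ! k))"
  shows "(\<Sum>\<Omega>\<in>Fs. V \<Omega>) = (\<Sum>x\<in>M. G x)"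
proof -
  have "V \<Omega> = sum G {x\<in>M. f x = \<Omega>}" if "\<Omega> \<in> Fs" for \<Omega>
  proof -
    have "V \<Omega> = sum_list (map G (ms \<Omega>))"
      using V that by (simp add: sum_list_sum_nth atLeast0LessThan)
    also have "\<dots> = sum G {x\<in>M. f x = \<Omega>}"
      using enum that by (simp add: sum_list_distinct_conv_sum_set)
    finally show ?thesis .
  qed
  then have "(\<Sum>\<Omega>\<in>Fs. V \<Omega>) = (\<Sum>\<Omega>\<in>Fs. sum G {x\<in>M. f x = \<Omega>})"
    by simp
  also have "\<dots> = sum G M"
    by (rule sum.group) (use assms in auto)
  finally show ?thesis .
qed

theorem mainTheorem2:
  fixes N :: nat
    and X :: "nat \<Rightarrow> real"
    and M :: "'m set"
    and FL FR :: "'f set"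
    and lf rf :: "'m \<Rightarrow> 'f"
    and ms :: "'f \<Rightarrow> 'm list"
    and len :: "'m \<Rightarrow> real"
    and Fb :: "'m \<Rightarrow> real poly"
    and Ft :: "'f \<Rightarrow> real poly"
  assumes N: "N \<ge> 1"
    and nodes: "legendre_nodes01 N X"
    and finM: "finite M" and finL: "finite FL" and finR: "finite FR"
    and disjLR: "FL \<inter> FR = {}"
    and len_pos: "\<forall>x\<in>M. len x > 0"
    and lf_in: "\<forall>x\<in>M. lf x \<in> FL"
    and rf_in: "\<forall>x\<in>M. rf x \<in> FR"
    and msL: "\<forall>\<Omega>\<in>FL. ms \<Omega> \<noteq> [] \<and> distinct (ms \<Omega>) \<and> set (ms \<Omega>) = {x\<in>M. lf x = \<Omega>}"
    and msR: "\<forall>\<Omega>\<in>FR. ms \<Omega> \<noteq> [] \<and> distinct (ms \<Omega>) \<and> set (ms \<Omega>) = {x\<in>M. rf x = \<Omega>}"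
    and degFb: "\<forall>x\<in>M. degree (Fb x) \<le> N - 1"
    and degFt: "\<forall>\<Omega>\<in>FL \<union> FR. degree (Ft \<Omega>) \<le> N - 1"
    and proj: "\<forall>\<Omega>\<in>FL \<union> FR. \<forall>j\<in>{1..N}.
       (\<Sum>k<length (ms \<Omega>).
          integral {ok len (ms \<Omega>) k .. ok len (ms \<Omega>) k + sk len (ms \<Omega>) k}
            (\<lambda>\<xi>. (poly (Ft \<Omega>) \<xi>
                  - (1 / sk len (ms \<Omega>) k) *
                    poly (Fb (ms \<Omega> ! k)) ((\<xi> - ok len (ms \<Omega>) k) / sk len (ms \<Omega>) k))
                 * poly (lagrange_basis N X j) \<xi>)) = 0"
  shows "(\<forall>\<Omega>\<in>FL \<union> FR. integral {0..1} (\<lambda>\<xi>. poly (Ft \<Omega>) \<xi>)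
            = (\<Sum>k<length (ms \<Omega>). integral {0..1} (\<lambda>z. poly (Fb (ms \<Omega> ! k)) z)))
     \<and> (\<Sum>\<Omega>\<in>FL. integral {0..1} (\<lambda>\<xi>. poly (Ft \<Omega>) \<xi>))
         = (\<Sum>x\<in>M. integral {0..1} (\<lambda>z. poly (Fb x) z))
     \<and> (\<Sum>x\<in>M. integral {0..1} (\<lambda>z. poly (Fb x) z))
         = (\<Sum>\<Omega>\<in>FR. integral {0..1} (\<lambda>\<xi>. poly (Ft \<Omega>) \<xi>))"
proof -
  have inj: "inj_on X {1..N}"
    using nodes unfolding legendre_nodes01_def by blast
  have face: "integral {0..1} (poly (Ft \<Omega>))
      = (\<Sum>k<length (ms \<Omega>). integral {0..1} (poly (Fb (ms \<Omega> ! k))))" if "\<Omega> \<in> FL \<union> FR" for \<Omega>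
    using that msL msR len_pos proj by (intro projection_preserves_face_integral[OF inj N]) auto
  have "(\<Sum>\<Omega>\<in>FL. integral {0..1} (poly (Ft \<Omega>))) = (\<Sum>x\<in>M. integral {0..1} (poly (Fb x)))"
    by (rule sum_over_fibre_enumerations[OF finM finL lf_in, where ms = ms]) (use msL face in auto)
  moreover have "(\<Sum>\<Omega>\<in>FR. integral {0..1} (poly (Ft \<Omega>))) = (\<Sum>x\<in>M. integral {0..1} (poly (Fb x)))"
    by (rule sum_over_fibre_enumerations[OF finM finR rf_in, where ms = ms]) (use msR face in auto)
  ultimately show ?thesis
    using face by simp
qed

end
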